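(* For every integer $r\ge 0$, $\mathrm{LCD}[6r+6,2] < 4r+4$.
   Context: All codes are binary linear codes, i.e. subspaces of $\mathbb{F}_2^n$; an $[n,k,d]$ code is one of length $n$, dimension $k$ and minimum Hamming distance $d$. A linear code $C$ is an LCD code if $C\cap C^\perp=\{0\}$, where $C^\perp$ is the dual with respect to the standard dot product. For positive integers $n\ge k$, $\mathrm{LCD}[n,k]$ denotes the largest $d$ such that there exists a binary $[n,k,d]$ LCD code. *)

theory Defs
  imports Main
begin

text \<open>Vectors of F_2^n are modelled as functions nat => bool vanishing outside {..<n};
  True stands for 1 in F_2 and addition is exclusive or.\<close>

definition vecs :: "nat \<Rightarrow> (nat \<Rightarrow> bool) set" where
  "vecs n = {x. \<forall>i. n \<le> i \<longrightarrow> \<not> x i}"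

definition vzero :: "nat \<Rightarrow> bool" where
  "vzero = (\<lambda>i. False)"

definition vadd :: "(nat \<Rightarrow> bool) \<Rightarrow> (nat \<Rightarrow> bool) \<Rightarrow> nat \<Rightarrow> bool" where
  "vadd x y = (\<lambda>i. x i \<noteq> y i)"

text \<open>Over F_2 a subspace is exactly a subset containing 0 and closed under addition.\<close>
definition linear_code :: "nat \<Rightarrow> (nat \<Rightarrow> bool) set \<Rightarrow> bool" where
  "linear_code n C \<longleftrightarrow> C \<subseteq> vecs n \<and> vzero \<in> C \<and> (\<forall>x\<in>C. \<forall>y\<in>C. vadd x y \<in> C)"

definition code_dim :: "(nat \<Rightarrow> bool) set \<Rightarrow> nat \<Rightarrow> bool" where
  "code_dim C k \<longleftrightarrow> card C = 2 ^ k"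

definition hweight :: "nat \<Rightarrow> (nat \<Rightarrow> bool) \<Rightarrow> nat" where
  "hweight n x = card {i. i < n \<and> x i}"

definition hdist :: "nat \<Rightarrow> (nat \<Rightarrow> bool) \<Rightarrow> (nat \<Rightarrow> bool) \<Rightarrow> nat" where
  "hdist n x y = card {i. i < n \<and> x i \<noteq> y i}"

definition min_dist :: "nat \<Rightarrow> (nat \<Rightarrow> bool) set \<Rightarrow> nat" where
  "min_dist n C = Min {hdist n x y | x y. x \<in> C \<and> y \<in> C \<and> x \<noteq> y}"

text \<open>Standard dot product over F_2: x.y = 0 iff |supp x \<inter> supp y| is even.\<close>
definition dual_code :: "nat \<Rightarrow> (nat \<Rightarrow> bool) set \<Rightarrow> (nat \<Rightarrow> bool) set" where
  "dual_code n C = {y \<in> vecs n. \<forall>x\<in>C. even (card {i. i < n \<and> x i \<and> y i})}"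

definition is_LCD :: "nat \<Rightarrow> (nat \<Rightarrow> bool) set \<Rightarrow> bool" where
  "is_LCD n C \<longleftrightarrow> C \<inter> dual_code n C = {vzero}"

definition has_LCD :: "nat \<Rightarrow> nat \<Rightarrow> nat \<Rightarrow> bool" where
  "has_LCD n k d \<longleftrightarrow> (\<exists>C. linear_code n C \<and> code_dim C k \<and> is_LCD n C \<and> min_dist n C = d)"

definition LCD_max :: "nat \<Rightarrow> nat \<Rightarrow> nat" where
  "LCD_max n k = (GREATEST d. has_LCD n k d)"

end

theory Submission
  imports Defs
begin

text \<open>Write a binary code of dimension 2 as C = {0, a, b, a + b}. Since
  wt(a + b) = wt a + wt b - 2 |a \<and> b| and |a \<or> b| \<le> n, the three nonzero weights add up to
  2 |a \<or> b| \<le> 2n, so the minimum distance d satisfies 3d \<le> 2n. For n = 6m and d \<ge> 4m this is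
  an equality throughout: wt a = 4m and |a \<and> b| = 2m are both even, so a is orthogonal to
  all of C, a nonzero element of C \<inter> dual C, and C is not LCD. Hence every LCD [6m, 2, d] code has
  d < 4m; the span of two unit vectors, an [n, 2, 1] LCD code, shows that LCD[6m, 2] is
  attained.\<close>

abbreviation overlap :: "nat \<Rightarrow> (nat \<Rightarrow> bool) \<Rightarrow> (nat \<Rightarrow> bool) \<Rightarrow> nat" where
  "overlap n x y \<equiv> card {i. i < n \<and> x i \<and> y i}"

lemma overlap_commute: "overlap n x y = overlap n y x"
  by (simp add: conj_commute)

lemma vadd_eq_vzero_iff [simp]: "vadd x y = vzero \<longleftrightarrow> x = y"
  by (auto simp: vadd_def vzero_def fun_eq_iff)

lemma vadd_eq_left_iff [simp]: "vadd x y = x \<longleftrightarrow> y = vzero"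
  by (auto simp: vadd_def vzero_def fun_eq_iff)

lemma vadd_eq_right_iff [simp]: "vadd x y = y \<longleftrightarrow> x = vzero"
  by (auto simp: vadd_def vzero_def fun_eq_iff)

lemma card_Collect_less_eq_sum: "card {i. i < (n::nat) \<and> P i} = (\<Sum>i<n. of_bool (P i))"
proof -
  have "{i. i < n \<and> P i} = {..<n} \<inter> {i. P i}" by auto
  then show ?thesis by simp
qed

lemma hweight_vadd: "hweight n (vadd x y) + 2 * overlap n x y = hweight n x + hweight n y"
  unfolding hweight_def vadd_def card_Collect_less_eq_sum sum_distrib_left sum.distrib[symmetric]
  by (rule sum.cong) auto

lemma hweight_add_le_overlap: "hweight n x + hweight n y \<le> n + overlap n x y"
proof -
  have "hweight n x + hweight n y = (\<Sum>i<n. of_bool (x i) + of_bool (y i))"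
    unfolding hweight_def card_Collect_less_eq_sum sum.distrib ..
  also have "\<dots> \<le> (\<Sum>i<n. 1 + of_bool (x i \<and> y i))"
    by (rule sum_mono) auto
  also have "\<dots> = n + overlap n x y"
    unfolding card_Collect_less_eq_sum sum.distrib by simp
  finally show ?thesis .
qed

lemma overlap_vadd_left: "overlap n (vadd x y) x + overlap n y x = hweight n x"
  unfolding hweight_def vadd_def card_Collect_less_eq_sum sum.distrib[symmetric]
  by (rule sum.cong) auto

lemma card_span2:
  assumes "a \<noteq> vzero" "b \<noteq> vzero" "a \<noteq> b"
  shows "card {vzero, a, b, vadd a b} = 4"
proof -
  have "vzero \<noteq> vadd a b" "a \<noteq> vadd a b" "b \<noteq> vadd a b"
    using assms vadd_eq_vzero_iff vadd_eq_left_iff vadd_eq_right_iff by metis+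
  then show ?thesis using assms by simp
qed

lemma linear_code_span2:
  assumes "a \<in> vecs n" "b \<in> vecs n"
  shows "linear_code n {vzero, a, b, vadd a b}"
  using assms unfolding linear_code_def
  by (auto simp: vecs_def vzero_def vadd_def)

lemma linear_code_card_4E:
  assumes "linear_code n C" "card C = 4"
  obtains a b where "a \<noteq> vzero" "b \<noteq> vzero" "a \<noteq> b" "C = {vzero, a, b, vadd a b}"
proof -
  have "finite C" using assms(2) by (metis card.infinite zero_neq_numeral)
  have zero: "vzero \<in> C" and closed: "\<And>x y. x \<in> C \<Longrightarrow> y \<in> C \<Longrightarrow> vadd x y \<in> C"
    using assms(1) unfolding linear_code_def by auto
  have "card (C - {vzero}) = 3" using zero assms(2) by simp
  then obtain a where a: "a \<in> C" "a \<noteq> vzero"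
    by (metis Diff_iff card.empty ex_in_conv singletonI zero_neq_numeral)
  have "card (C - {vzero, a}) = 2" using zero a assms(2) \<open>finite C\<close> by (simp add: card_Diff_subset)
  then obtain b where b: "b \<in> C" "b \<noteq> vzero" "b \<noteq> a"
    by (metis Diff_iff card.empty ex_in_conv insertCI zero_neq_numeral)
  have "{vzero, a, b, vadd a b} \<subseteq> C" using zero a b closed by blast
  moreover have "card {vzero, a, b, vadd a b} = card C"
    using card_span2 a b assms(2) by metis
  ultimately have "C = {vzero, a, b, vadd a b}" using card_subset_eq[OF \<open>finite C\<close>] by blast
  with a b that show ?thesis by blast
qed

lemma min_dist_eq_Min_hweight:
  assumes "linear_code n C"
  shows "min_dist n C = Min {hweight n x | x. x \<in> C \<and> x \<noteq> vzero}"
proof -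
  have "{hdist n x y | x y. x \<in> C \<and> y \<in> C \<and> x \<noteq> y} = {hweight n x | x. x \<in> C \<and> x \<noteq> vzero}"
  proof (intro equalityI subsetI)
    fix d assume "d \<in> {hdist n x y | x y. x \<in> C \<and> y \<in> C \<and> x \<noteq> y}"
    then obtain x y where "x \<in> C" "y \<in> C" "x \<noteq> y" "d = hweight n (vadd x y)"
      by (auto simp: hdist_def hweight_def vadd_def)
    then show "d \<in> {hweight n x | x. x \<in> C \<and> x \<noteq> vzero}"
      using assms by (auto simp: linear_code_def)
  next
    fix d assume "d \<in> {hweight n x | x. x \<in> C \<and> x \<noteq> vzero}"
    then obtain x where "x \<in> C" "x \<noteq> vzero" "d = hdist n x vzero"
      by (auto simp: hdist_def hweight_def vzero_def)
    then show "d \<in> {hdist n x y | x y. x \<in> C \<and> y \<in> C \<and> x \<noteq> y}"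
      using assms by (auto simp: linear_code_def)
  qed
  then show ?thesis unfolding min_dist_def by simp
qed

lemma min_dist_le_hweight:
  assumes "linear_code n C" "finite C" "x \<in> C" "x \<noteq> vzero"
  shows "min_dist n C \<le> hweight n x"
  unfolding min_dist_eq_Min_hweight[OF assms(1)] using assms(2-4) by (intro Min_le) auto

lemma in_dual_code_span2:
  assumes "a \<in> vecs n" "even (hweight n a)" "even (overlap n a b)"
  shows "a \<in> dual_code n {vzero, a, b, vadd a b}"
proof -
  have "even (overlap n b a)"
    using assms(3) overlap_commute by metis
  moreover have "even (overlap n (vadd a b) a)"
    using overlap_vadd_left[of n a b] assms(2) calculation by (metis even_add)
  ultimately show ?thesis
    using assms(1,2) by (auto simp: dual_code_def hweight_def vzero_def)
qed

lemma has_LCD_two_dim_lt: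
  assumes "has_LCD (6 * m) 2 d"
  shows "d < 4 * m"
proof (rule ccontr)
  assume "\<not> d < 4 * m"
  obtain C where C: "linear_code (6 * m) C" "card C = 4" "is_LCD (6 * m) C" "min_dist (6 * m) C = d"
    using assms by (auto simp: has_LCD_def code_dim_def)
  obtain a b where ab: "a \<noteq> vzero" "b \<noteq> vzero" "a \<noteq> b" and C_eq: "C = {vzero, a, b, vadd a b}"
    using linear_code_card_4E[OF C(1,2)] by blast
  have "d \<le> hweight (6 * m) a" "d \<le> hweight (6 * m) b" "d \<le> hweight (6 * m) (vadd a b)"
    using min_dist_le_hweight[OF C(1)] C(4) ab unfolding C_eq by auto
  moreover note hweight_vadd[of "6 * m" a b] hweight_add_le_overlap[of "6 * m" a b]
  ultimately have "hweight (6 * m) a = 4 * m" "overlap (6 * m) a b = 2 * m"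
    using \<open>\<not> d < 4 * m\<close> by linarith+
  moreover have "a \<in> vecs (6 * m)"
    using C(1) unfolding C_eq linear_code_def by blast
  ultimately have "a \<in> dual_code (6 * m) C"
    unfolding C_eq by (intro in_dual_code_span2) simp_all
  then show False
    using C(3) ab(1) unfolding C_eq is_LCD_def by blast
qed

lemma has_LCD_two_dim_one:
  assumes "2 \<le> n"
  shows "has_LCD n 2 1"
proof -
  define e0 :: "nat \<Rightarrow> bool" where "e0 = (\<lambda>i. i = 0)"
  define e1 :: "nat \<Rightarrow> bool" where "e1 = (\<lambda>i. i = 1)"
  define C where "C = {vzero, e0, e1, vadd e0 e1}"
  have ne: "e0 \<noteq> vzero" "e1 \<noteq> vzero" "e0 \<noteq> e1"
    by (auto simp: e0_def e1_def vzero_def fun_eq_iff)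
  have lin: "linear_code n C"
    unfolding C_def using assms by (intro linear_code_span2) (auto simp: vecs_def e0_def e1_def)
  have "card C = 4"
    unfolding C_def using ne by (rule card_span2)
  have "{i. i < n \<and> e0 i} = {0}" "{i. i < n \<and> e1 i} = {1}" "{i. i < n \<and> vadd e0 e1 i} = {0, 1}"
    "{i. i < n \<and> e0 i \<and> vadd e0 e1 i} = {0}"
    using assms by (auto simp: e0_def e1_def vadd_def)
  then have w: "hweight n e0 = 1" "hweight n e1 = 1" "hweight n (vadd e0 e1) = 2"
    and "overlap n e0 (vadd e0 e1) = 1"
    by (simp_all add: hweight_def)
  have "{hweight n x | x. x \<in> C \<and> x \<noteq> vzero} = hweight n ` {e0, e1, vadd e0 e1}"
    using ne by (auto simp: C_def)
  then have "min_dist n C = 1"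
    using min_dist_eq_Min_hweight[OF lin] w by simp
  have "C \<inter> dual_code n C \<subseteq> {vzero}"
    using w \<open>overlap n e0 (vadd e0 e1) = 1\<close> unfolding C_def dual_code_def hweight_def by auto
  moreover have "vzero \<in> C \<inter> dual_code n C"
    using lin by (auto simp: C_def dual_code_def linear_code_def vzero_def)
  ultimately have "is_LCD n C"
    unfolding is_LCD_def by blast
  then show ?thesis
    using lin \<open>card C = 4\<close> \<open>min_dist n C = 1\<close> by (auto simp: has_LCD_def code_dim_def)
qed

theorem proposition2p4:
  fixes r :: nat
  shows "LCD_max (6 * r + 6) 2 < 4 * r + 4"
proof -
  have lt: "d < 4 * r + 4" if "has_LCD (6 * r + 6) 2 d" for d
    using has_LCD_two_dim_lt[of "Suc r" d] that by (simp add: ac_simps)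
  have "has_LCD (6 * r + 6) 2 (GREATEST d. has_LCD (6 * r + 6) 2 d)"
  proof (rule GreatestI_ex_nat)
    show "\<exists>d. has_LCD (6 * r + 6) 2 d"
      using has_LCD_two_dim_one[of "6 * r + 6"] by auto
    show "d \<le> 4 * r + 4" if "has_LCD (6 * r + 6) 2 d" for d
      using lt[OF that] by simp
  qed
  then show ?thesis
    unfolding LCD_max_def by (rule lt)
qed

end
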